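(* For every $K\in\mathcal{S}_n$, \[K=\bigcap_{x\in\mathbb{R}^n}\bigl(x+\delta(\{x\},K)\,B_2^n\bigr).\]
   Context: $B_2^n$ is the closed Euclidean unit ball in $\mathbb{R}^n$; $\delta$ is the Hausdorff distance $\delta(K_0,K_1)=\inf\{\lambda>0: K_0\subseteq K_1+\lambda B_2^n,\ K_1\subseteq K_0+\lambda B_2^n\}$. $\mathcal{S}_n$ is the set of convex bodies (compact convex non-empty sets) in $\mathbb{R}^n$ which are intersections of Euclidean unit balls. *)

theory Defs
  imports "HOL-Analysis.Analysis"
begin

definition hausdorff_delta :: "'a::euclidean_space set \<Rightarrow> 'a set \<Rightarrow> real" where
  "hausdorff_delta K0 K1 = Inf {r. r > 0 \<and>
      K0 \<subseteq> {a + b | a b. a \<in> K1 \<and> b \<in> (\<lambda>v. r *\<^sub>R v) ` cball 0 1} \<and>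
      K1 \<subseteq> {a + b | a b. a \<in> K0 \<and> b \<in> (\<lambda>v. r *\<^sub>R v) ` cball 0 1}}"

definition convex_body :: "'a::euclidean_space set \<Rightarrow> bool" where
  "convex_body K \<longleftrightarrow> compact K \<and> convex K \<and> K \<noteq> {}"

definition S_sets :: "'a::euclidean_space set set" where
  "S_sets = {K. convex_body K \<and> (\<exists>C. K = (\<Inter>c\<in>C. cball c 1))}"

end

theory Submission
  imports Defs
begin

text \<open>For a bounded non-empty set \<open>K\<close>, the Hausdorff distance from a point \<open>x\<close> to \<open>K\<close> is the
  distance \<open>R\<^sub>K(x)\<close> from \<open>x\<close> to the farthest point of \<open>K\<close>, and \<open>cball c r \<supseteq> K\<close> holds exactly when
  \<open>R\<^sub>K(c) \<le> r\<close>. Hence \<open>\<Inter>\<^sub>x cball x (R\<^sub>K(x))\<close> is the intersection of all closed balls containing \<open>K\<close>,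
  which is \<open>K\<close> itself whenever \<open>K\<close> is an intersection of closed balls, e.g. of unit balls.\<close>

lemma translated_scaled_unit_ball:
  fixes x :: "'a::real_normed_vector"
  assumes "r \<ge> 0"
  shows "{x + b | b. b \<in> (\<lambda>v. r *\<^sub>R v) ` cball 0 1} = cball x r"
proof (cases "r = 0")
  case True
  then show ?thesis by (auto intro!: image_eqI[of _ _ 0])
next
  case False
  then have "(\<lambda>v. r *\<^sub>R v) ` cball (0::'a) 1 = cball 0 r"
    using assms cball_scale[of r 0 1] by simp
  then show ?thesis
    by (auto simp: dist_norm intro!: exI[of _ "_ - x"])
qed

lemma Minkowski_sum_scaled_unit_ball:
  fixes L :: "'a::real_normed_vector set"
  assumes "r \<ge> 0"
  shows "{a + b | a b. a \<in> L \<and> b \<in> (\<lambda>v. r *\<^sub>R v) ` cball 0 1} = (\<Union>a\<in>L. cball a r)"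
proof -
  have "{a + b | a b. a \<in> L \<and> b \<in> (\<lambda>v. r *\<^sub>R v) ` cball 0 1} =
        (\<Union>a\<in>L. {a + b | b. b \<in> (\<lambda>v. r *\<^sub>R v) ` cball 0 1})"
    by blast
  then show ?thesis
    by (simp add: translated_scaled_unit_ball[OF assms])
qed

lemma bdd_above_dist_image:
  fixes K :: "'a::metric_space set"
  assumes "bounded K"
  shows "bdd_above (dist x ` K)"
  using assms by (auto simp: bounded_any_center[of _ x] intro: bdd_aboveI2)

lemma farthest_dist_nonneg:
  fixes K :: "'a::metric_space set"
  assumes "bounded K" "K \<noteq> {}"
  shows "(SUP y\<in>K. dist x y) \<ge> 0"
  using assms by (meson all_not_in_conv bdd_above_dist_image cSUP_upper2 zero_le_dist)

lemma Inf_positive_atLeast: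
  fixes s :: real
  assumes "s \<ge> 0"
  shows "Inf {r. r > 0 \<and> s \<le> r} = s"
proof (cases "s = 0")
  case True
  then have "{r. r > 0 \<and> s \<le> r} = {0<..}" by auto
  then show ?thesis using True by simp
next
  case False
  then have "{r. r > 0 \<and> s \<le> r} = {s..}" using assms by auto
  then show ?thesis by simp
qed

lemma hausdorff_delta_singleton:
  fixes K :: "'a::euclidean_space set"
  assumes "bounded K" "K \<noteq> {}"
  shows "hausdorff_delta {x} K = (SUP y\<in>K. dist x y)"
proof -
  let ?R = "SUP y\<in>K. dist x y"
  have sums_iff: "{x} \<subseteq> {a + b | a b. a \<in> K \<and> b \<in> (\<lambda>v. r *\<^sub>R v) ` cball 0 1} \<and>
        K \<subseteq> {a + b | a b. a \<in> {x} \<and> b \<in> (\<lambda>v. r *\<^sub>R v) ` cball 0 1} \<longleftrightarrow> ?R \<le> r"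
    if "r > 0" for r
  proof -
    have "K \<subseteq> cball x r \<Longrightarrow> {x} \<subseteq> (\<Union>a\<in>K. cball a r)"
      using \<open>K \<noteq> {}\<close> by (force simp: dist_commute)
    moreover have "K \<subseteq> cball x r \<longleftrightarrow> ?R \<le> r"
      using assms by (simp add: cSUP_le_iff bdd_above_dist_image subset_eq)
    ultimately show ?thesis
      using that Minkowski_sum_scaled_unit_ball[of r K] Minkowski_sum_scaled_unit_ball[of r "{x}"]
      by auto
  qed
  have "hausdorff_delta {x} K = Inf {r. r > 0 \<and> ?R \<le> r}"
    unfolding hausdorff_delta_def by (intro arg_cong[where f = Inf] Collect_cong) (use sums_iff in blast)
  then show ?thesis
    using Inf_positive_atLeast farthest_dist_nonneg[OF assms] by simp
qed

lemma Inter_cballs_eq_Inter_farthest_dist_cballs: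
  fixes K :: "'a::metric_space set"
  assumes "bounded K" "K \<noteq> {}" and K_eq: "K = (\<Inter>(c, r)\<in>C. cball c r)"
  shows "K = (\<Inter>x. cball x (SUP y\<in>K. dist x y))"
proof
  show "K \<subseteq> (\<Inter>x. cball x (SUP y\<in>K. dist x y))"
    using \<open>bounded K\<close> by (auto intro!: cSUP_upper bdd_above_dist_image)
next
  have "cball c r \<supseteq> (\<Inter>x. cball x (SUP y\<in>K. dist x y))" if "(c, r) \<in> C" for c r
  proof -
    have "K \<subseteq> cball c r" using K_eq that by blast
    then have "(SUP y\<in>K. dist c y) \<le> r"
      using assms by (simp add: cSUP_le_iff bdd_above_dist_image subset_iff)
    then show ?thesis
      by (metis (no_types, lifting) INT_E UNIV_I mem_cball order_trans subsetI)
  qed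
  then show "(\<Inter>x. cball x (SUP y\<in>K. dist x y)) \<subseteq> K"
    by (subst (2) K_eq) blast
qed

theorem lemma13:
  fixes K :: "'a::euclidean_space set"
  assumes "K \<in> S_sets"
  shows "K = (\<Inter>x\<in>(UNIV::'a set). {x + b | b. b \<in> (\<lambda>v. hausdorff_delta {x} K *\<^sub>R v) ` cball 0 1})"
proof -
  obtain C where "convex_body K" and K_eq: "K = (\<Inter>c\<in>C. cball c 1)"
    using assms unfolding S_sets_def by auto
  then have bounded: "bounded K" and nonempty: "K \<noteq> {}"
    unfolding convex_body_def by (auto intro: compact_imp_bounded)
  have "K = (\<Inter>x. cball x (SUP y\<in>K. dist x y))"
    by (rule Inter_cballs_eq_Inter_farthest_dist_cballs[OF bounded nonempty, of "(\<lambda>c. (c, 1)) ` C"])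
      (simp add: K_eq)
  also have "\<dots> = (\<Inter>x. cball x (hausdorff_delta {x} K))"
    by (simp add: hausdorff_delta_singleton[OF bounded nonempty])
  also have "\<dots> = (\<Inter>x. {x + b | b. b \<in> (\<lambda>v. hausdorff_delta {x} K *\<^sub>R v) ` cball 0 1})"
    by (simp add: hausdorff_delta_singleton[OF bounded nonempty] farthest_dist_nonneg[OF bounded nonempty]
        translated_scaled_unit_ball)
  finally show ?thesis by simp
qed

end
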